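(* Let $d\ge1$ and let $X$ be $\mathbb{R}^d$ equipped with a norm $\|\cdot\|$ such that $X$ is uniformly smooth, i.e. its modulus of smoothness $$\rho(u):=\sup_{\|x\|=\|y\|=1}\Big(\tfrac12(\|x+uy\|+\|x-uy\|)-1\Big)$$ satisfies $\lim_{u\to0}\rho(u)/u=0$. Let $B=\{x:\|x\|\le1\}$, $B^o(x)=\{y:\|y-x\|<1\}$, and let $\{e^j\}_{j=1}^d$ be the standard basis of $\mathbb{R}^d$. For $a>0$ define $x^j:=ae^j$, $j=1,\dots,d$, and $x^{d+1}:=-a\sum_{j=1}^de^j$. Then there exists $a>0$ such that $$B\subset\bigcup_{j=1}^{d+1}B^o(x^j).$$ *)

theory Defs
  imports "HOL-Analysis.Analysis"
begin

definition is_norm :: "('a::real_vector \<Rightarrow> real) \<Rightarrow> bool" where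
  "is_norm N \<longleftrightarrow>
     (\<forall>x. 0 \<le> N x) \<and> (\<forall>x. N x = 0 \<longleftrightarrow> x = 0) \<and>
     (\<forall>c x. N (c *\<^sub>R x) = \<bar>c\<bar> * N x) \<and>
     (\<forall>x y. N (x + y) \<le> N x + N y)"

definition modulus_smoothness :: "('a::real_vector \<Rightarrow> real) \<Rightarrow> real \<Rightarrow> real" where
  "modulus_smoothness N u =
     (SUP p\<in>{(x, y). N x = 1 \<and> N y = 1}.
        (N (fst p + u *\<^sub>R snd p) + N (fst p - u *\<^sub>R snd p)) / 2 - 1)"

definition uniformly_smooth :: "('a::real_vector \<Rightarrow> real) \<Rightarrow> bool" where
  "uniformly_smooth N \<longleftrightarrow> ((\<lambda>u. modulus_smoothness N u / u) \<longlongrightarrow> 0) (at 0)"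

end

theory Submission
  imports Defs
begin

text \<open>Let \<open>x\<close> be a unit vector and \<open>g\<close> a supporting functional at \<open>x\<close>
  (\<open>g x = 1\<close>, \<open>g \<le> N\<close>). The vectors \<open>e\<^sub>1, \<dots>, e\<^sub>d, -(e\<^sub>1 + \<dots> + e\<^sub>d)\<close>
  positively span the space and \<open>x\<close> is bounded in the Euclidean norm, so \<open>g \<ge> k\<close> on one of them,
  \<open>u\<close>, with \<open>k > 0\<close> independent of \<open>x\<close>. Then \<open>N (x + a u) \<ge> 1 + a k\<close>, whereas uniform
  smoothness gives \<open>N (x + a u) + N (x - a u) \<le> 2 + 2 \<rho>(a N u) = 2 + o(a)\<close>; hence
  \<open>N (x - a u) < 1\<close> once \<open>a\<close> is small. Interior points of the ball follow by convexity.\<close>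

locale norm_function =
  fixes N :: "'a::real_vector \<Rightarrow> real"
  assumes is_norm: "is_norm N"
begin

lemma nonneg: "0 \<le> N x"
  using is_norm by (simp add: is_norm_def)

lemma eq_0_iff: "N x = 0 \<longleftrightarrow> x = 0"
  using is_norm by (simp add: is_norm_def)

lemma scaleR: "N (c *\<^sub>R x) = \<bar>c\<bar> * N x"
  using is_norm by (simp add: is_norm_def)

lemma triangle: "N (x + y) \<le> N x + N y"
  using is_norm by (simp add: is_norm_def)

lemma zero [simp]: "N 0 = 0"
  by (simp add: eq_0_iff)

lemma minus: "N (- x) = N x"
  using scaleR[of "-1" x] by simp

lemma pos: "x \<noteq> 0 \<Longrightarrow> 0 < N x"
  using nonneg[of x] eq_0_iff[of x] by linarith

lemma sum_le: "N (sum f A) \<le> (\<Sum>i\<in>A. N (f i))"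
proof (induction A rule: infinite_finite_induct)
  case (insert a A)
  then show ?case using triangle[of "f a" "sum f A"] by simp
qed simp_all

lemma diff_le: "N x - N y \<le> N (x - y)"
  using triangle[of "x - y" y] by simp

lemma convex_open_unit_ball: "convex {z. N z < 1}"
proof (rule convexI)
  fix x y and u v :: real
  assume x: "x \<in> {z. N z < 1}" and y: "y \<in> {z. N z < 1}" and uv: "0 \<le> u" "0 \<le> v" "u + v = 1"
  have "N (u *\<^sub>R x + v *\<^sub>R y) \<le> u * N x + v * N y"
    using triangle[of "u *\<^sub>R x" "v *\<^sub>R y"] uv by (simp add: scaleR)
  also have "\<dots> < 1"
  proof (cases "u = 0")
    case False
    then have "u * N x < u" using x uv by simp
    moreover have "v * N y \<le> v" using y uv by (simp add: mult_left_le)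
    ultimately show ?thesis using uv by linarith
  qed (use y uv in simp)
  finally show "u *\<^sub>R x + v *\<^sub>R y \<in> {z. N z < 1}" by simp
qed

lemma scaleR_diff_lt_one:
  assumes "N (y - v) < 1" "N v < 1" "0 \<le> r" "r \<le> 1"
  shows "N (r *\<^sub>R y - v) < 1"
proof -
  have "r *\<^sub>R (y - v) + (1 - r) *\<^sub>R (- v) \<in> {z. N z < 1}"
    by (rule convexD[OF convex_open_unit_ball]) (use assms in \<open>simp_all add: minus\<close>)
  then show ?thesis by (simp add: algebra_simps)
qed

lemma modulus_smoothness_ge:
  assumes "N x = 1" "N y = 1"
  shows "(N (x + u *\<^sub>R y) + N (x - u *\<^sub>R y)) / 2 - 1 \<le> modulus_smoothness N u"
  unfolding modulus_smoothness_def
proof (rule cSUP_upper2)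
  show "bdd_above ((\<lambda>p. (N (fst p + u *\<^sub>R snd p) + N (fst p - u *\<^sub>R snd p)) / 2 - 1)
          ` {(x, y). N x = 1 \<and> N y = 1})"
  proof (rule bdd_aboveI2)
    fix p :: "'a \<times> 'a" assume "p \<in> {(x, y). N x = 1 \<and> N y = 1}"
    then obtain a b where p: "p = (a, b)" "N a = 1" "N b = 1" by auto
    have "N (a + u *\<^sub>R b) \<le> 1 + \<bar>u\<bar>" "N (a - u *\<^sub>R b) \<le> 1 + \<bar>u\<bar>"
      using triangle[of a "u *\<^sub>R b"] triangle[of a "- (u *\<^sub>R b)"] p
      by (simp_all add: scaleR minus)
    then show "(N (fst p + u *\<^sub>R snd p) + N (fst p - u *\<^sub>R snd p)) / 2 - 1 \<le> \<bar>u\<bar>"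
      using p by (simp add: field_simps)
  qed
  show "(x, y) \<in> {(x, y). N x = 1 \<and> N y = 1}" using assms by simp
qed simp

end

lemma uniformly_smooth_modulus_lt:
  assumes "uniformly_smooth N" "0 < \<epsilon>"
  shows "\<exists>\<delta>>0. \<forall>s. 0 < s \<longrightarrow> s < \<delta> \<longrightarrow> modulus_smoothness N s < \<epsilon> * s"
proof -
  obtain \<delta> where "0 < \<delta>"
    and \<delta>: "\<And>s. s \<noteq> 0 \<Longrightarrow> norm (s - 0) < \<delta> \<Longrightarrow> norm (modulus_smoothness N s / s - 0) < \<epsilon>"
    using LIM_D[OF assms(1)[unfolded uniformly_smooth_def] assms(2)] by blast
  have "modulus_smoothness N s < \<epsilon> * s" if "0 < s" "s < \<delta>" for s
    using \<delta>[of s] that by (simp add: field_simps)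
  with \<open>0 < \<delta>\<close> show ?thesis by blast
qed

locale euclidean_norm_function = norm_function N for N :: "'a::euclidean_space \<Rightarrow> real"
begin

lemma le_mult_norm: "N z \<le> (\<Sum>b\<in>Basis. N b) * norm z"
proof -
  have "N z = N (\<Sum>b\<in>Basis. (z \<bullet> b) *\<^sub>R b)" by (simp add: euclidean_representation)
  also have "\<dots> \<le> (\<Sum>b\<in>Basis. \<bar>z \<bullet> b\<bar> * N b)"
    by (rule order_trans[OF sum_le]) (simp add: scaleR)
  also have "\<dots> \<le> (\<Sum>b\<in>Basis. norm z * N b)"
    by (intro sum_mono mult_right_mono Basis_le_norm nonneg)
  finally show ?thesis by (simp add: sum_distrib_left mult.commute)
qed

lemma continuous_on: "continuous_on S N"
proof (rule lipschitz_on_continuous_on)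
  show "(\<Sum>b\<in>Basis. N b)-lipschitz_on S N"
  proof (rule lipschitz_onI)
    fix x y
    show "dist (N x) (N y) \<le> (\<Sum>b\<in>Basis. N b) * dist x y"
      using diff_le[of x y] diff_le[of y x] le_mult_norm[of "x - y"] le_mult_norm[of "y - x"]
      by (simp add: dist_real_def dist_norm norm_minus_commute)
  qed (simp add: sum_nonneg nonneg)
qed

lemma ex_mult_norm_le: "\<exists>c>0. \<forall>z. c * norm z \<le> N z"
proof -
  obtain b :: 'a where "b \<in> Basis" using nonempty_Basis by blast
  then have "sphere (0::'a) 1 \<noteq> {}" by (auto intro!: exI[of _ b])
  then obtain x0 where x0: "x0 \<in> sphere 0 1" and min: "\<forall>y\<in>sphere 0 1. N x0 \<le> N y"
    using continuous_attains_inf[OF compact_sphere _ continuous_on] by blast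
  have "N x0 * norm z \<le> N z" for z
  proof (cases "z = 0")
    case False
    then have "N x0 \<le> N (z /\<^sub>R norm z)" using min by simp
    also have "\<dots> = N z / norm z" by (simp add: scaleR field_simps)
    finally show ?thesis using False by (simp add: field_simps)
  qed (simp add: nonneg)
  moreover have "0 < N x0" using x0 by (intro pos) auto
  ultimately show ?thesis by blast
qed

lemma le_if_inner_bounded_on_open_unit_ball:
  assumes "\<And>z. N z < 1 \<Longrightarrow> g \<bullet> z \<le> 1"
  shows "g \<bullet> w \<le> N w"
proof (rule dense_ge)
  fix t assume t: "N w < t"
  with nonneg[of w] have "0 < t" by linarith
  with t have "N ((1 / t) *\<^sub>R w) < 1" by (simp add: scaleR)
  then have "g \<bullet> ((1 / t) *\<^sub>R w) \<le> 1" by (rule assms)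
  with \<open>0 < t\<close> show "g \<bullet> w \<le> t" by (simp add: field_simps)
qed

lemma supporting_functional:
  assumes "N x = 1"
  shows "\<exists>g. g \<bullet> x = 1 \<and> (\<forall>w. g \<bullet> w \<le> N w)"
proof -
  have "convex ((\<lambda>z. z - x) ` {z. N z < 1})"
    by (rule convex_translation_subtract[OF convex_open_unit_ball])
  moreover have "0 \<notin> (\<lambda>z. z - x) ` {z. N z < 1}" using assms by auto
  ultimately obtain a where "a \<noteq> 0" and a: "\<forall>y\<in>(\<lambda>z. z - x) ` {z. N z < 1}. 0 \<le> a \<bullet> y"
    using separating_hyperplane_set_0 by blast
  define h where "h = - a"
  have "h \<noteq> 0" using \<open>a \<noteq> 0\<close> by (simp add: h_def)
  have h: "h \<bullet> z \<le> h \<bullet> x" if "N z < 1" for z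
    using a that by (auto simp: h_def inner_diff_right)
  define s where "s = 1 / (2 * (N h + 1))"
  have "0 < s" using nonneg[of h] by (simp add: s_def)
  have "N (s *\<^sub>R h) = N h / (2 * (N h + 1))"
    using \<open>0 < s\<close> by (simp add: scaleR s_def)
  also have "\<dots> < 1"
    using nonneg[of h] by (simp add: divide_less_eq)
  finally have "s * (h \<bullet> h) \<le> h \<bullet> x"
    using h[of "s *\<^sub>R h"] by simp
  moreover have "0 < s * (h \<bullet> h)"
    using \<open>0 < s\<close> \<open>h \<noteq> 0\<close> by simp
  ultimately have "0 < h \<bullet> x" by linarith
  define g where "g = h /\<^sub>R (h \<bullet> x)"
  have "g \<bullet> x = 1" using \<open>0 < h \<bullet> x\<close> by (simp add: g_def)
  moreover have "g \<bullet> w \<le> N w" for w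
  proof (rule le_if_inner_bounded_on_open_unit_ball)
    fix z assume "N z < 1"
    then show "g \<bullet> z \<le> 1"
      using h[of z] \<open>0 < h \<bullet> x\<close> by (simp add: g_def field_simps)
  qed
  ultimately show ?thesis by blast
qed

lemma diff_lt_one_if_smoothness_small:
  assumes x: "N x = 1" "g \<bullet> x = 1" and g: "\<forall>w. g \<bullet> w \<le> N w" and "u \<noteq> 0"
    and small: "2 * modulus_smoothness N (a * N u) < a * (g \<bullet> u)"
  shows "N (x - a *\<^sub>R u) < 1"
proof -
  have "0 < N u" using pos \<open>u \<noteq> 0\<close> .
  define y where "y = (1 / N u) *\<^sub>R u"
  have y: "N y = 1" "(a * N u) *\<^sub>R y = a *\<^sub>R u"
    using \<open>0 < N u\<close> by (simp_all add: y_def scaleR)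
  have "N (x + a *\<^sub>R u) + N (x - a *\<^sub>R u) \<le> 2 + 2 * modulus_smoothness N (a * N u)"
    using modulus_smoothness_ge[OF x(1) y(1), of "a * N u"] unfolding y(2) by (simp add: field_simps)
  moreover have "1 + a * (g \<bullet> u) \<le> N (x + a *\<^sub>R u)"
    using g[rule_format, of "x + a *\<^sub>R u"] x(2) by (simp add: inner_add_right)
  ultimately show ?thesis using small by linarith
qed

lemma unit_sphere_covered:
  assumes "uniformly_smooth N" "finite U" "U \<noteq> {}" "0 \<notin> U" "0 < k"
    and detect: "\<And>x g. N x = 1 \<Longrightarrow> g \<bullet> x = 1 \<Longrightarrow> \<forall>w. g \<bullet> w \<le> N w \<Longrightarrow> \<exists>u\<in>U. k \<le> g \<bullet> u"
  shows "\<exists>a>0. (\<forall>u\<in>U. N (a *\<^sub>R u) < 1) \<and> (\<forall>x. N x = 1 \<longrightarrow> (\<exists>u\<in>U. N (x - a *\<^sub>R u) < 1))"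
proof -
  define K where "K = Max (N ` U)"
  have NK: "N u \<le> K" if "u \<in> U" for u
    using that assms(2) by (simp add: K_def)
  have Npos: "0 < N u" if "u \<in> U" for u
    using that assms(4) by (intro pos) auto
  have "0 < K" using assms(3) NK Npos by (meson ex_in_conv less_le_trans)
  obtain \<delta> where "0 < \<delta>"
    and \<delta>: "\<And>s. 0 < s \<Longrightarrow> s < \<delta> \<Longrightarrow> modulus_smoothness N s < k / (2 * K) * s"
    using uniformly_smooth_modulus_lt[OF assms(1), of "k / (2 * K)"] assms(5) \<open>0 < K\<close> by auto
  define a where "a = min \<delta> 1 / (2 * K)"
  have "0 < a" using \<open>0 < \<delta>\<close> \<open>0 < K\<close> by (simp add: a_def)
  have aN: "0 < a * N u" "a * N u < \<delta>" "a * N u < 1" if "u \<in> U" for u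
  proof -
    have "a * N u \<le> a * K" using NK[OF that] \<open>0 < a\<close> by simp
    also have "\<dots> = min \<delta> 1 / 2" using \<open>0 < K\<close> by (simp add: a_def)
    finally show "a * N u < \<delta>" "a * N u < 1" using \<open>0 < \<delta>\<close> by linarith+
    show "0 < a * N u" using \<open>0 < a\<close> Npos[OF that] by simp
  qed
  have "\<exists>u\<in>U. N (x - a *\<^sub>R u) < 1" if "N x = 1" for x
  proof -
    obtain g where g: "g \<bullet> x = 1" "\<forall>w. g \<bullet> w \<le> N w"
      using supporting_functional[OF \<open>N x = 1\<close>] by blast
    then obtain u where "u \<in> U" and "k \<le> g \<bullet> u"
      using detect \<open>N x = 1\<close> by blast
    have "2 * modulus_smoothness N (a * N u) < k / K * (a * N u)"
      using \<delta>[OF aN(1,2)[OF \<open>u \<in> U\<close>]] \<open>0 < K\<close> by (simp add: field_simps)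
    also have "\<dots> \<le> k / K * (a * K)"
      using NK[OF \<open>u \<in> U\<close>] \<open>0 < a\<close> \<open>0 < K\<close> assms(5) by (intro mult_left_mono) simp_all
    also have "\<dots> \<le> a * (g \<bullet> u)"
      using \<open>k \<le> g \<bullet> u\<close> \<open>0 < a\<close> \<open>0 < K\<close> by simp
    finally have "2 * modulus_smoothness N (a * N u) < a * (g \<bullet> u)" .
    moreover have "u \<noteq> 0" using \<open>u \<in> U\<close> assms(4) by blast
    ultimately have "N (x - a *\<^sub>R u) < 1"
      using diff_lt_one_if_smoothness_small[OF \<open>N x = 1\<close> g] by blast
    with \<open>u \<in> U\<close> show ?thesis by blast
  qed
  moreover have "N (a *\<^sub>R u) < 1" if "u \<in> U" for u
    using aN(3)[OF that] \<open>0 < a\<close> by (simp add: scaleR)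
  ultimately show ?thesis using \<open>0 < a\<close> by blast
qed

lemma closed_unit_ball_covered:
  assumes "uniformly_smooth N" "finite U" "U \<noteq> {}" "0 \<notin> U" "0 < k"
    and "\<And>x g. N x = 1 \<Longrightarrow> g \<bullet> x = 1 \<Longrightarrow> \<forall>w. g \<bullet> w \<le> N w \<Longrightarrow> \<exists>u\<in>U. k \<le> g \<bullet> u"
  shows "\<exists>a>0. \<forall>x. N x \<le> 1 \<longrightarrow> (\<exists>u\<in>U. N (x - a *\<^sub>R u) < 1)"
proof -
  obtain a where "0 < a" and small: "\<forall>u\<in>U. N (a *\<^sub>R u) < 1"
    and sphere: "\<forall>x. N x = 1 \<longrightarrow> (\<exists>u\<in>U. N (x - a *\<^sub>R u) < 1)"
    using unit_sphere_covered[OF assms(1-5)] assms(6) by blast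
  have "\<exists>u\<in>U. N (x - a *\<^sub>R u) < 1" if "N x \<le> 1" for x
  proof (cases "x = 0")
    case True
    then show ?thesis using small assms(3) by (auto simp: minus)
  next
    case False
    have "0 < N x" using pos False .
    then have "N ((1 / N x) *\<^sub>R x) = 1" by (simp add: scaleR)
    then obtain u where "u \<in> U" and "N ((1 / N x) *\<^sub>R x - a *\<^sub>R u) < 1"
      using sphere by blast
    moreover have "N (a *\<^sub>R u) < 1" using small \<open>u \<in> U\<close> by blast
    ultimately have "N (x - a *\<^sub>R u) < 1"
      using scaleR_diff_lt_one[of "(1 / N x) *\<^sub>R x" "a *\<^sub>R u" "N x"] \<open>N x \<le> 1\<close> \<open>0 < N x\<close>
      by simp
    with \<open>u \<in> U\<close> show ?thesis by blast
  qed
  with \<open>0 < a\<close> show ?thesis by blast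
qed

end

definition simplex_directions :: "(real ^ 'n) set" where
  "simplex_directions = range (\<lambda>j. axis j 1) \<union> {- (\<Sum>j\<in>UNIV. axis j 1)}"

lemma simplex_directions_finite: "finite simplex_directions"
  by (simp add: simplex_directions_def)

lemma simplex_directions_nonempty: "simplex_directions \<noteq> {}"
  by (simp add: simplex_directions_def)

lemma zero_notin_simplex_directions: "(0 :: real ^ 'n) \<notin> simplex_directions"
proof -
  obtain j :: 'n where True by simp
  have "(\<Sum>i\<in>UNIV. axis i 1 :: real ^ 'n) $ j = 1"
    by (simp add: sum_component axis_def)
  then have "(\<Sum>i\<in>UNIV. axis i 1 :: real ^ 'n) \<noteq> 0"
    by (metis zero_index zero_neq_one)
  moreover have "axis j 1 \<noteq> (0 :: real ^ 'n)" for j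
    by simp
  ultimately show ?thesis by (auto simp: simplex_directions_def)
qed

lemma abs_component_le_if_bounded_on_simplex_directions:
  fixes g :: "real ^ 'n" and k :: real
  assumes lt: "\<And>i. g $ i < k" and sum_lt: "- (\<Sum>i\<in>UNIV. g $ i) < k"
  shows "\<bar>g $ j\<bar> \<le> CARD('n) * k"
proof -
  have "(\<Sum>i\<in>UNIV. g $ i) = g $ j + (\<Sum>i\<in>UNIV - {j}. g $ i)"
    by (simp add: sum.remove)
  also have "(\<Sum>i\<in>UNIV - {j}. g $ i) \<le> (CARD('n) - 1) * k"
    using sum_mono[of "UNIV - {j}" "\<lambda>i. g $ i" "\<lambda>_. k"] lt
    by (simp add: less_imp_le card_Diff_singleton of_nat_diff)
  finally have "- (CARD('n) * k) < g $ j"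
    using sum_lt by (simp add: algebra_simps)
  with lt[of j] have "0 < (CARD('n) + 1) * k" by (simp add: algebra_simps)
  then have "k \<le> CARD('n) * k" by (simp add: zero_less_mult_iff)
  with lt[of j] \<open>- (CARD('n) * k) < g $ j\<close> show ?thesis by linarith
qed

lemma simplex_directions_detect_functional:
  fixes g x :: "real ^ 'n" and R :: real
  assumes gx: "g \<bullet> x = 1" and "norm x \<le> R"
  shows "\<exists>u\<in>simplex_directions. 1 / (2 * CARD('n)^2 * R) \<le> g \<bullet> u"
proof (rule ccontr)
  define d where "d = real CARD('n)"
  define k where "k = 1 / (2 * d^2 * R)"
  have "x \<noteq> 0" using gx by auto
  then have "0 < R" using \<open>norm x \<le> R\<close> by (metis zero_less_norm_iff order_less_le_trans)
  have "0 < k" using \<open>0 < R\<close> by (simp add: k_def d_def)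
  assume "\<not> ?thesis"
  then have "\<And>j. g $ j < k" "- (\<Sum>j\<in>UNIV. g $ j) < k"
    by (auto simp: simplex_directions_def k_def d_def not_le inner_axis inner_sum_right)
  then have gj: "\<bar>g $ j\<bar> \<le> d * k" for j
    unfolding d_def by (rule abs_component_le_if_bounded_on_simplex_directions)
  have xj: "\<bar>x $ j\<bar> \<le> R" for j
    using component_le_norm_cart[of x j] \<open>norm x \<le> R\<close> by linarith
  have "1 = (\<Sum>j\<in>UNIV. g $ j * x $ j)" using gx by (simp add: inner_vec_def)
  also have "\<dots> \<le> (\<Sum>j\<in>UNIV. \<bar>g $ j\<bar> * \<bar>x $ j\<bar>)"
    by (rule sum_mono) (metis abs_ge_self abs_mult)
  also have "\<dots> \<le> (\<Sum>j\<in>(UNIV::'n set). d * k * R)"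
    using gj xj \<open>0 < k\<close> by (intro sum_mono mult_mono) (auto simp: d_def)
  also have "\<dots> = 1 / 2"
    using \<open>0 < R\<close> by (simp add: d_def k_def power2_eq_square)
  finally show False by simp
qed

theorem proposition3p3:
  fixes N :: "real ^ 'n \<Rightarrow> real"
  assumes "is_norm N"
    and "uniformly_smooth N"
  shows "\<exists>a > 0. {x. N x \<le> 1} \<subseteq>
           (\<Union>j\<in>UNIV. {y. N (y - a *\<^sub>R axis j 1) < 1})
           \<union> {y. N (y - (- a *\<^sub>R (\<Sum>j\<in>UNIV. axis j 1))) < 1}"
proof -
  interpret euclidean_norm_function N by unfold_locales (fact assms(1))
  obtain c where "0 < c" and c: "\<forall>z. c * norm z \<le> N z"
    using ex_mult_norm_le by blast
  have detect: "\<exists>u\<in>simplex_directions. c / (2 * CARD('n)^2) \<le> g \<bullet> u"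
    if "N x = 1" "g \<bullet> x = 1" "\<forall>w. g \<bullet> w \<le> N w" for x g :: "real ^ 'n"
  proof -
    have "norm x \<le> 1 / c" using c[rule_format, of x] \<open>N x = 1\<close> \<open>0 < c\<close> by (simp add: field_simps)
    then obtain u where "u \<in> simplex_directions" "1 / (2 * CARD('n)^2 * (1 / c)) \<le> g \<bullet> u"
      using simplex_directions_detect_functional[OF \<open>g \<bullet> x = 1\<close>] by blast
    then show ?thesis by auto
  qed
  have "\<exists>a>0. \<forall>x. N x \<le> 1 \<longrightarrow> (\<exists>u\<in>simplex_directions. N (x - a *\<^sub>R u) < 1)"
    using \<open>0 < c\<close> by (intro closed_unit_ball_covered[OF assms(2) simplex_directions_finite
        simplex_directions_nonempty zero_notin_simplex_directions _ detect]) simp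
  then obtain a where "0 < a"
    and a: "\<forall>x. N x \<le> 1 \<longrightarrow> (\<exists>u\<in>simplex_directions. N (x - a *\<^sub>R u) < 1)"
    by blast
  show ?thesis
  proof (intro exI[of _ a] conjI subsetI \<open>0 < a\<close>)
    fix x assume "x \<in> {x. N x \<le> 1}"
    then obtain u where "u \<in> simplex_directions" "N (x - a *\<^sub>R u) < 1" using a by blast
    then show "x \<in> (\<Union>j\<in>UNIV. {y. N (y - a *\<^sub>R axis j 1) < 1})
        \<union> {y. N (y - (- a *\<^sub>R (\<Sum>j\<in>UNIV. axis j 1))) < 1}"
      by (auto simp: simplex_directions_def)
  qed
qed

end
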